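(* For every integer $m\ge1$, the polynomials $G_m(t,\beta)$ satisfy: (i) for all $\beta\in\mathbb{R}$ and $t\neq0$, $t^{m-1}G_m\!\left(\frac1t,1-\beta\right)=G_m(t,\beta)$; (ii) for all $\beta>0$, $G_m(0,\beta)>0$ if $m$ is even and $G_m(0,\beta)<0$ if $m$ is odd; (iii) for all $0<\beta<\frac12$, $G_m(-1,\beta)<0$ if $m\equiv1,2\pmod 4$ and $G_m(-1,\beta)>0$ if $m\equiv0,3\pmod4$; (iv) for all $\frac12<\beta<1$, $G_m(-1,\beta)<0$ if $m\equiv0,1\pmod4$ and $G_m(-1,\beta)>0$ if $m\equiv2,3\pmod4$.
   Context: $G_1(t,\beta)=-1$ and for $m\ge2$, $G_m(t,\beta)=[\beta(t-1)-(m-1)t]G_{m-1}(t,\beta)+t(t-1)\frac{\partial}{\partial t}G_{m-1}(t,\beta)$. *)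

theory Defs
  imports "HOL-Computational_Algebra.Polynomial"
begin

text \<open>For fixed beta, Gpoly m beta is G_m(t,beta) as a polynomial in t.
  G_1 = -1;  G_m = [beta(t-1) - (m-1) t] G_(m-1) + t(t-1) d/dt G_(m-1)  (m >= 2).
  The value at m = 0 is an unused dummy.\<close>
fun Gpoly :: "nat \<Rightarrow> real \<Rightarrow> real poly" where
  "Gpoly 0 \<beta> = 0"
| "Gpoly (Suc 0) \<beta> = [:-1:]"
| "Gpoly (Suc (Suc k)) \<beta> =
     [:-\<beta>, \<beta> - real (Suc k):] * Gpoly (Suc k) \<beta>
     + [:0, -1, 1:] * pderiv (Gpoly (Suc k) \<beta>)"

definition G :: "nat \<Rightarrow> real \<Rightarrow> real \<Rightarrow> real" where
  "G m t \<beta> = poly (Gpoly m \<beta>) t"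

end

theory Submission
  imports Defs
begin

text \<open>
  (i) If \<open>g(t) = t^k h(1/t)\<close> for \<open>t \<noteq> 0\<close>, then \<open>t g'(t) = k g(t) - t^(k-1) h'(1/t)\<close>; with this,
  the recursion for \<open>t^(m-1) G\<^sub>m(1/t, 1-\<beta>)\<close> becomes the recursion for \<open>G\<^sub>m(t, \<beta>)\<close>.
  (ii) At \<open>t = 0\<close> the recursion reads \<open>G\<^sub>m(0,\<beta>) = -\<beta> G\<^sub>m\<^sub>-\<^sub>1(0,\<beta>)\<close>.
  (iii), (iv) Treating \<open>G\<^sub>m\<close> as a polynomial in both variables gives
  \<open>\<partial>\<^sub>\<beta> G\<^sub>m\<^sub>+\<^sub>1 = m (t-1) G\<^sub>m\<close>, so \<open>\<partial>\<^sub>\<beta> G\<^sub>m\<^sub>+\<^sub>1(-1,\<beta>) = -2m G\<^sub>m(-1,\<beta>)\<close>.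
  By (i), \<open>G\<^sub>m(-1,1-\<beta>) = (-1)^(m-1) G\<^sub>m(-1,\<beta>)\<close>; hence \<open>G\<^sub>m(-1,\<cdot>)\<close> vanishes at \<open>1/2\<close> for even \<open>m\<close>,
  and at \<open>0\<close> for odd \<open>m \<ge> 3\<close>, since also \<open>G\<^sub>m(t,0) = t G\<^sub>m(t,1)\<close>.
  Starting from that zero, the mean value theorem carries the sign of \<open>G\<^sub>m(-1,\<cdot>)\<close> on \<open>(0,1/2)\<close>
  over to \<open>G\<^sub>m\<^sub>+\<^sub>1(-1,\<cdot>)\<close>, and the reflection \<open>\<beta> \<mapsto> 1-\<beta>\<close> transfers it to \<open>(1/2,1)\<close>.
\<close>

definition pderiv_coeffs :: "'a::{comm_semiring_1,semiring_no_zero_divisors} poly poly \<Rightarrow> 'a poly poly" where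
  "pderiv_coeffs R = map_poly pderiv R"

lemma coeff_pderiv_coeffs [simp]: "coeff (pderiv_coeffs R) n = pderiv (coeff R n)"
  by (simp add: pderiv_coeffs_def coeff_map_poly)

lemma pderiv_coeffs_0 [simp]: "pderiv_coeffs 0 = 0"
  by (simp add: pderiv_coeffs_def)

lemma pderiv_coeffs_smult:
  "pderiv_coeffs (smult c R) = smult (pderiv c) R + smult c (pderiv_coeffs R)"
  by (rule poly_eqI) (simp add: pderiv_mult algebra_simps)

lemma pderiv_pderiv_coeffs: "pderiv (pderiv_coeffs R) = pderiv_coeffs (pderiv R)"
  by (rule poly_eqI) (simp add: coeff_pderiv pderiv_smult of_nat_poly)

lemma pderiv_coeffs_pCons: "pderiv_coeffs (pCons a R) = pCons (pderiv a) (pderiv_coeffs R)"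
  by (simp add: pderiv_coeffs_def map_poly_pCons)

lemma pderiv_poly_const: "pderiv (poly R [:b:]) = poly (pderiv_coeffs R) [:b:]"
  by (induction R) (simp_all add: pderiv_coeffs_pCons pderiv_add pderiv_smult)

lemma has_field_derivative_poly_poly_const:
  fixes R :: "'a::real_normed_field poly poly"
  shows "((\<lambda>b. poly (poly R [:b:]) t) has_field_derivative poly (poly (pderiv R) [:b:]) t) (at b)"
  by (induction R) (auto intro!: derivative_eq_intros simp: pderiv_pCons)

text \<open>\<open>G\<^sub>m(t,\<beta>)\<close> as a polynomial in \<open>\<beta>\<close> whose coefficients are polynomials in \<open>t\<close>:
  \<^const>\<open>pderiv\<close> is then \<open>\<partial>\<^sub>\<beta>\<close> and \<^const>\<open>pderiv_coeffs\<close> is \<open>\<partial>\<^sub>t\<close>.\<close>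

fun Gpoly_bivar :: "nat \<Rightarrow> real poly poly" where
  "Gpoly_bivar 0 = 0"
| "Gpoly_bivar (Suc 0) = [:[:-1:]:]"
| "Gpoly_bivar (Suc (Suc k)) =
     [:[:0, - real (Suc k):], [:-1, 1:]:] * Gpoly_bivar (Suc k)
     + smult [:0, -1, 1:] (pderiv_coeffs (Gpoly_bivar (Suc k)))"

lemma Gpoly_eq_poly_Gpoly_bivar: "Gpoly m \<beta> = poly (Gpoly_bivar m) [:\<beta>:]"
proof (induction m rule: Gpoly_bivar.induct)
  case (3 k)
  have "poly [:[:0, - real (Suc k):], [:-1, 1:]:] [:\<beta>:] = [:-\<beta>, \<beta> - real (Suc k):]"
    by (simp add: algebra_simps)
  with 3 show ?case
    by (simp only: Gpoly.simps Gpoly_bivar.simps poly_add poly_mult poly_smult pderiv_poly_const)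
qed simp_all

lemma pderiv_Gpoly_bivar: "pderiv (Gpoly_bivar (Suc n)) = smult (smult (real n) [:-1, 1:]) (Gpoly_bivar n)"
proof (induction n)
  case 0
  then show ?case by simp
next
  case (Suc n)
  define X :: "real poly" where "X = [:-1, 1:]"
  define C :: "real poly" where "C = [:0, -1, 1:]"
  define A :: "nat \<Rightarrow> real poly poly" where "A k = [:[:0, - real (Suc k):], X:]" for k
  have dX: "pderiv X = 1"
    by (simp add: X_def pderiv_pCons)
  have dA: "pderiv (A k) = [:X:]" for k
    by (simp add: A_def pderiv_pCons)
  have IH: "pderiv (Gpoly_bivar (Suc n)) = smult (smult (real n) X) (Gpoly_bivar n)"
    using Suc.IH by (simp add: X_def)
  have G_Suc: "Gpoly_bivar (Suc (Suc k))
      = A k * Gpoly_bivar (Suc k) + smult C (pderiv_coeffs (Gpoly_bivar (Suc k)))" for k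
    by (simp add: A_def C_def X_def)
  have "pderiv (Gpoly_bivar (Suc (Suc n)))
      = A n * pderiv (Gpoly_bivar (Suc n)) + Gpoly_bivar (Suc n) * [:X:]
        + smult C (pderiv_coeffs (pderiv (Gpoly_bivar (Suc n))))"
    by (simp only: G_Suc pderiv_add pderiv_mult pderiv_smult pderiv_pderiv_coeffs dA)
  also have "\<dots> = smult X (Gpoly_bivar (Suc n))
      + smult [:real n:] (smult X (A n * Gpoly_bivar n) + smult C (Gpoly_bivar n)
                        + smult (C * X) (pderiv_coeffs (Gpoly_bivar n)))"
    by (simp add: IH pderiv_coeffs_smult pderiv_smult dX smult_add_right)
  also have "\<dots> = smult X (Gpoly_bivar (Suc n)) + smult [:real n:] (smult X (Gpoly_bivar (Suc n)))"
  proof (cases n)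
    case (Suc j)
    have "[:X:] * A n + [:C:] = [:X:] * A j"
      by (simp add: A_def C_def X_def Suc algebra_simps)
    then have "([:X:] * A n + [:C:]) * Gpoly_bivar n = [:X:] * A j * Gpoly_bivar n"
      by simp
    then have "smult X (A n * Gpoly_bivar n) + smult C (Gpoly_bivar n) = smult X (A j * Gpoly_bivar n)"
      by (simp add: distrib_right)
    moreover have "Gpoly_bivar (Suc n) = A j * Gpoly_bivar n + smult C (pderiv_coeffs (Gpoly_bivar n))"
      unfolding Suc by (rule G_Suc)
    ultimately show ?thesis
      by (simp add: smult_add_right mult.commute[of C X])
  qed simp
  also have "\<dots> = smult (smult (real (Suc n)) X) (Gpoly_bivar (Suc n))"
    by (simp add: smult_add_left)
  finally show ?case by (simp add: X_def)
qed

lemma has_real_derivative_G_beta: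
  "((\<lambda>\<beta>. G (Suc n) t \<beta>) has_real_derivative real n * (t - 1) * G n t \<beta>) (at \<beta>)"
  using has_field_derivative_poly_poly_const[of "Gpoly_bivar (Suc n)" t \<beta>]
  by (simp add: G_def Gpoly_eq_poly_Gpoly_bivar pderiv_Gpoly_bivar algebra_simps)

lemma poly_pderiv_reflected:
  fixes g h :: "real poly"
  assumes reflected: "\<And>s. s \<noteq> 0 \<Longrightarrow> poly g s = s ^ k * poly h (1 / s)" and "t \<noteq> 0"
  shows "t * poly (pderiv g) t = real k * poly g t - t ^ k * poly (pderiv h) (1 / t) / t"
proof -
  have "((\<lambda>s. s ^ k * poly h (1 / s)) has_real_derivative
      real k * t ^ (k - 1) * poly h (1 / t) - t ^ k * poly (pderiv h) (1 / t) / t\<^sup>2) (at t)"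
    using \<open>t \<noteq> 0\<close> by (auto intro!: derivative_eq_intros simp: field_simps power2_eq_square)
  then have "(poly g has_real_derivative
      real k * t ^ (k - 1) * poly h (1 / t) - t ^ k * poly (pderiv h) (1 / t) / t\<^sup>2) (at t)"
    by (rule has_field_derivative_transform_within_open[where S = "- {0}"])
      (use \<open>t \<noteq> 0\<close> reflected in auto)
  then have "poly (pderiv g) t
      = real k * t ^ (k - 1) * poly h (1 / t) - t ^ k * poly (pderiv h) (1 / t) / t\<^sup>2"
    using DERIV_unique poly_DERIV by blast
  moreover have "t * t ^ (k - 1) = t ^ k" if "k > 0"
    using that by (simp add: power_eq_if)
  ultimately show ?thesis
    using assms by (cases "k = 0") (auto simp: field_simps power2_eq_square)
qed

lemma Gpoly_reflect:
  "t \<noteq> 0 \<Longrightarrow> t ^ k * poly (Gpoly (Suc k) (1 - \<beta>)) (1 / t) = poly (Gpoly (Suc k) \<beta>) t"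
proof (induction k arbitrary: t)
  case 0
  then show ?case by simp
next
  case (Suc k)
  define g where "g = Gpoly (Suc k) \<beta>"
  define h where "h = Gpoly (Suc k) (1 - \<beta>)"
  have g_eq: "poly g t = t ^ k * poly h (1 / t)"
    using Suc by (simp add: g_def h_def)
  have dg: "t * poly (pderiv g) t = real k * poly g t - t ^ k * poly (pderiv h) (1 / t) / t"
    by (rule poly_pderiv_reflected) (use Suc in \<open>simp_all add: g_def h_def\<close>)
  have "t ^ Suc k * poly (Gpoly (Suc (Suc k)) (1 - \<beta>)) (1 / t)
      = t ^ k * ((- \<beta> * (1 - t) - real k - t) * poly h (1 / t)
                 + (1 - t) / t * poly (pderiv h) (1 / t))"
    using Suc.prems by (simp add: h_def field_simps)
  also have "\<dots> = (- \<beta> + (\<beta> - real (Suc k)) * t) * poly g t + (t - 1) * (t * poly (pderiv g) t)"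
    unfolding dg g_eq using Suc.prems by (simp add: field_simps)
  also have "\<dots> = poly (Gpoly (Suc (Suc k)) \<beta>) t"
    by (simp add: g_def algebra_simps)
  finally show ?case .
qed

lemma G_at_0: "G (Suc k) 0 \<beta> = - ((- \<beta>) ^ k)"
  unfolding G_def by (induction k) auto

lemma Gpoly_beta_0_eq: "Gpoly (Suc (Suc k)) 0 = [:0, 1:] * Gpoly (Suc (Suc k)) 1"
proof (induction k)
  case 0
  then show ?case by simp
next
  case (Suc k)
  define P where "P = Gpoly (Suc (Suc k)) 1"
  have regroup: "a * (x * P) + c * (x * Q + P) = x * (b * P + c * Q)"
    if "a * x + c = x * b" for a b c x Q :: "real poly"
    using that by algebra
  have "Gpoly (Suc (Suc (Suc k))) 0
      = [:0, - real (Suc (Suc k)):] * ([:0, 1:] * P) + [:0, -1, 1:] * ([:0, 1:] * pderiv P + P)"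
    by (simp only: Gpoly.simps(3)[of "Suc k" 0] Suc.IH P_def) (simp add: pderiv_mult pderiv_pCons)
  also have "\<dots> = [:0, 1:] * ([:-1, 1 - real (Suc (Suc k)):] * P + [:0, -1, 1:] * pderiv P)"
    by (rule regroup) simp
  also have "\<dots> = [:0, 1:] * Gpoly (Suc (Suc (Suc k))) 1"
    by (simp only: Gpoly.simps(3)[of "Suc k" 1] P_def)
  finally show ?case .
qed

lemma G_neg1_reflect: "G (Suc k) (-1) (1 - \<beta>) = (-1) ^ k * G (Suc k) (-1) \<beta>"
  using Gpoly_reflect[of "-1" k "1 - \<beta>"] by (simp add: G_def)

lemma G_neg1_half_eq_0: "odd k \<Longrightarrow> G (Suc k) (-1) (1/2) = 0"
  using G_neg1_reflect[of k "1/2"] by simp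

lemma G_neg1_0_eq_0: "odd k \<Longrightarrow> G (Suc (Suc k)) (-1) 0 = 0"
  using G_neg1_reflect[of "Suc k" 1]
  by (simp add: G_def Gpoly_beta_0_eq del: Gpoly.simps)

lemma G_neg1_mean_value:
  assumes "a < b"
  obtains z where "a < z" "z < b"
    "G (Suc n) (-1) b - G (Suc n) (-1) a = -2 * real n * (b - a) * G n (-1) z"
  using MVT2[OF assms, of "G (Suc n) (-1)" "\<lambda>\<beta>. real n * (-1 - 1) * G n (-1) \<beta>"]
    has_real_derivative_G_beta by (fastforce simp: algebra_simps)

definition sign_below_half :: "nat \<Rightarrow> real" where
  "sign_below_half m = (if m mod 4 \<in> {1, 2} then -1 else 1)"

definition sign_above_half :: "nat \<Rightarrow> real" where
  "sign_above_half m = (if m mod 4 \<in> {0, 1} then -1 else 1)"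

lemma sign_below_half_Suc:
  "sign_below_half (Suc n) = (if odd n then sign_below_half n else - sign_below_half n)"
  unfolding sign_below_half_def by (simp add: mod_Suc) presburger

lemma sign_above_half_eq: "sign_above_half (Suc k) = (-1) ^ k * sign_below_half (Suc k)"
  unfolding sign_below_half_def sign_above_half_def
  by (simp add: mod_Suc minus_one_power_iff) presburger

lemma sign_G_neg1_below_half:
  assumes "m \<ge> 1" "0 < \<beta>" "\<beta> < 1/2"
  shows "sign_below_half m * G m (-1) \<beta> > 0"
  using assms
proof (induction m arbitrary: \<beta> rule: nat_induct_at_least)
  case base
  then show ?case by (simp add: sign_below_half_def G_def)
next
  case (Suc n)
  obtain z c where z: "0 < z" "z < 1/2" and "c > 0"
    and sign_eq: "sign_below_half (Suc n) * G (Suc n) (-1) \<beta> = c * (sign_below_half n * G n (-1) z)"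
  proof (cases "odd n")
    case True
    obtain z where z: "\<beta> < z" "z < 1/2"
      and mvt: "G (Suc n) (-1) (1/2) - G (Suc n) (-1) \<beta> = -2 * real n * (1/2 - \<beta>) * G n (-1) z"
      using G_neg1_mean_value \<open>\<beta> < 1/2\<close> by blast
    have G_eq: "G (Suc n) (-1) \<beta> = 2 * real n * (1/2 - \<beta>) * G n (-1) z"
      using mvt G_neg1_half_eq_0[OF True] by simp
    show ?thesis
    proof (rule that)
      show "0 < z" "z < 1/2" "2 * real n * (1/2 - \<beta>) > 0"
        using z Suc by auto
      show "sign_below_half (Suc n) * G (Suc n) (-1) \<beta>
          = 2 * real n * (1/2 - \<beta>) * (sign_below_half n * G n (-1) z)"
        using G_eq True by (simp add: sign_below_half_Suc)
    qed
  next
    case False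
    obtain k where k: "n = Suc k" "odd k"
      using \<open>n \<ge> 1\<close> False by (cases n) auto
    obtain z where z: "0 < z" "z < \<beta>"
      and mvt: "G (Suc n) (-1) \<beta> - G (Suc n) (-1) 0 = -2 * real n * (\<beta> - 0) * G n (-1) z"
      using G_neg1_mean_value \<open>0 < \<beta>\<close> by blast
    have G_eq: "G (Suc n) (-1) \<beta> = - (2 * real n * \<beta>) * G n (-1) z"
      using mvt G_neg1_0_eq_0[OF k(2), folded k(1)] by simp
    show ?thesis
    proof (rule that)
      show "0 < z" "z < 1/2" "2 * real n * \<beta> > 0"
        using z Suc by auto
      show "sign_below_half (Suc n) * G (Suc n) (-1) \<beta>
          = 2 * real n * \<beta> * (sign_below_half n * G n (-1) z)"
        using G_eq False by (simp add: sign_below_half_Suc)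
    qed
  qed
  then show ?case
    using Suc.IH[OF z] by (simp add: sign_eq)
qed

lemma sign_G_neg1_above_half:
  assumes "m \<ge> 1" "1/2 < \<beta>" "\<beta> < 1"
  shows "sign_above_half m * G m (-1) \<beta> > 0"
proof -
  obtain k where m: "m = Suc k"
    using assms(1) by (cases m) auto
  have "sign_above_half m * G m (-1) \<beta> = sign_below_half m * G m (-1) (1 - \<beta>)"
    using G_neg1_reflect[of k "1 - \<beta>"]
    by (simp add: m sign_above_half_eq algebra_simps flip: power_add)
  also have "\<dots> > 0"
    using sign_G_neg1_below_half assms by simp
  finally show ?thesis .
qed

theorem lemma4p6:
  fixes m :: nat
  assumes "m \<ge> 1"
  shows "(\<forall>\<beta> t::real. t \<noteq> 0 \<longrightarrow> t ^ (m - 1) * G m (1 / t) (1 - \<beta>) = G m t \<beta>)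
    \<and> (\<forall>\<beta>::real. \<beta> > 0 \<longrightarrow> (even m \<longrightarrow> G m 0 \<beta> > 0) \<and> (odd m \<longrightarrow> G m 0 \<beta> < 0))
    \<and> (\<forall>\<beta>::real. 0 < \<beta> \<and> \<beta> < 1/2 \<longrightarrow>
         (m mod 4 \<in> {1, 2} \<longrightarrow> G m (-1) \<beta> < 0) \<and> (m mod 4 \<in> {0, 3} \<longrightarrow> G m (-1) \<beta> > 0))
    \<and> (\<forall>\<beta>::real. 1/2 < \<beta> \<and> \<beta> < 1 \<longrightarrow>
         (m mod 4 \<in> {0, 1} \<longrightarrow> G m (-1) \<beta> < 0) \<and> (m mod 4 \<in> {2, 3} \<longrightarrow> G m (-1) \<beta> > 0))"
proof -
  obtain k where m: "m = Suc k"
    using assms by (cases m) auto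
  show ?thesis
  proof (intro conjI allI impI)
    show "t ^ (m - 1) * G m (1 / t) (1 - \<beta>) = G m t \<beta>" if "t \<noteq> 0" for \<beta> t :: real
      using Gpoly_reflect[OF that] by (simp add: G_def m)
  next
    fix \<beta> :: real
    assume "\<beta> > 0"
    then show "even m \<Longrightarrow> G m 0 \<beta> > 0" and "odd m \<Longrightarrow> G m 0 \<beta> < 0"
      by (simp_all add: m G_at_0)
  next
    fix \<beta> :: real
    assume "0 < \<beta> \<and> \<beta> < 1/2"
    then have "sign_below_half m * G m (-1) \<beta> > 0"
      using sign_G_neg1_below_half assms by blast
    then show "m mod 4 \<in> {1, 2} \<Longrightarrow> G m (-1) \<beta> < 0" and "m mod 4 \<in> {0, 3} \<Longrightarrow> G m (-1) \<beta> > 0"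
      by (auto simp: sign_below_half_def)
  next
    fix \<beta> :: real
    assume "1/2 < \<beta> \<and> \<beta> < 1"
    then have "sign_above_half m * G m (-1) \<beta> > 0"
      using sign_G_neg1_above_half assms by blast
    then show "m mod 4 \<in> {0, 1} \<Longrightarrow> G m (-1) \<beta> < 0" and "m mod 4 \<in> {2, 3} \<Longrightarrow> G m (-1) \<beta> > 0"
      by (auto simp: sign_above_half_def)
  qed
qed

end
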